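(* Let $d\ge3$ and consider $\Omega_\varepsilon$ with perturbation $\rho=Y_{p',q'}$ (i.e. $A_{p,q}=\delta_{p,p'}\delta_{q,q'}$). For every $k\in\mathbb{Z}^+$ and every $j=1,\dots,N(d,k)$, with $\lambda^{(1)}_{k,j}$ the first-order coefficients of the Steklov eigenvalue branches emanating from $k$ (i.e. the eigenvalues of $M^{(d,k)}$): (1) if $p'=0$ (so $\rho=Y_{0,1}=|S^d|^{-1/2}$ is constant), then $\lambda^{(1)}_{k,j}=-k|S^d|^{-1/2}$; (2) if $p'$ is odd, then $\lambda^{(1)}_{k,j}=0$, i.e. the Steklov eigenvalue $\lambda^\varepsilon_{k,j}$ is unperturbed at first order in $\varepsilon$.
   Context: Hyperspherical coordinates on $\mathbb{R}^{d+1}$; $\nabla_{S^d}$ the gradient on $S^d$, $d\sigma_d$ the surface measure, $|S^d|$ the surface area. $N(d,0)=1$, $N(d,\ell)=\binom{d+\ell}{d}-\binom{d+\ell-2}{d}$ for $\ell\ge1$. $\{Y_k^m\}$ is an orthonormal basis of complex degree-$k$ spherical harmonics, $\{Y_{p,q}\}_{q=1}^{N(d,p)}$ an orthonormal basis of real degree-$p$ spherical harmonics with $Y_{0,1}=|S^d|^{-1/2}$. For real $\rho\in C^1(S^d)$, $\Omega_\varepsilon=\{(r,\hat\theta):0\le r\le1+\varepsilon\rho(\hat\theta)\}$. The Steklov eigenvalues of $\Omega_\varepsilon$ near $k$ (of which there are $N(d,k)$ with multiplicity) have expansions $\lambda^\varepsilon_{k,j}=k+\varepsilon\lambda^{(1)}_{k,j}+O(\varepsilon^2)$,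 where $\lambda^{(1)}_{k,1}\le\cdots\le\lambda^{(1)}_{k,N(d,k)}$ are the eigenvalues of the Hermitian matrix $M^{(d,k)}_{m,n}=-\int_{S^d}k\rho\,Y_k^m\overline{Y_k^n}\,d\sigma_d-\int_{S^d}(\nabla_{S^d}\rho\cdot\nabla_{S^d}Y_k^m)\overline{Y_k^n}\,d\sigma_d$. *)

theory Defs
  imports "HOL-Analysis.Analysis" "Jordan_Normal_Form.Char_Poly"
begin

text \<open>The unit sphere S^d is modelled as sphere 0 1 in real^'n with CARD('n) = d+1.\<close>

text \<open>N(d,l): dimension of the space of degree-l spherical harmonics on S^d.\<close>
definition Ndim :: "nat \<Rightarrow> nat \<Rightarrow> nat" where
  "Ndim d l = (if l = 0 then 1 else (d + l choose d) - (d + l - 2 choose d))"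

definition hom_poly :: "nat \<Rightarrow> (real^'n \<Rightarrow> 'a::real_normed_field) \<Rightarrow> bool" where
  "hom_poly k P \<longleftrightarrow> (\<exists>A c. finite A \<and> (\<forall>\<alpha>\<in>A. (\<Sum>i\<in>UNIV. \<alpha> i) = k) \<and>
      (\<forall>x. P x = (\<Sum>\<alpha>\<in>A. c \<alpha> * (\<Prod>i\<in>UNIV. of_real (x $ i) ^ \<alpha> i))))"

definition laplacian :: "(real^'n \<Rightarrow> 'a::real_normed_vector) \<Rightarrow> real^'n \<Rightarrow> 'a" where
  "laplacian P x = (\<Sum>i\<in>UNIV. frechet_derivative
      (\<lambda>y. frechet_derivative P (at y) (axis i 1)) (at x) (axis i 1))"

definition sph_harm :: "nat \<Rightarrow> (real^'n \<Rightarrow> 'a::real_normed_field) \<Rightarrow> bool" where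
  "sph_harm k Y \<longleftrightarrow> (\<exists>P. hom_poly k P \<and> (\<forall>x. laplacian P x = 0) \<and>
      (\<forall>x\<in>sphere 0 1. Y x = P x))"

text \<open>Integral over S^d with respect to the surface measure sigma_d, via the cone formula
  int_{S^d} f dsigma = (d+1) * int_{B^{d+1}} f(x/|x|) dx.\<close>
definition sphere_int :: "(real^'n::finite \<Rightarrow> 'a::euclidean_space) \<Rightarrow> 'a" where
  "sphere_int f = real CARD('n) *\<^sub>R integral (ball 0 1) (\<lambda>x. f (sgn x))"

definition sphere_area :: "'n::finite itself \<Rightarrow> real" where
  "sphere_area _ = sphere_int (\<lambda>x::real^'n. 1::real)"

text \<open>Partial derivative of the (degree-0 homogeneous) extension x \<mapsto> f(x/|x|); at points of
  S^d the vector of these is the spherical gradient nabla_{S^d} f.\<close>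
definition sph_partial :: "(real^'n \<Rightarrow> 'a::real_normed_vector) \<Rightarrow> 'n \<Rightarrow> real^'n \<Rightarrow> 'a" where
  "sph_partial f i x = frechet_derivative (\<lambda>y. f (sgn y)) (at x) (axis i 1)"

definition sph_grad_dot :: "(real^'n \<Rightarrow> real) \<Rightarrow> (real^'n \<Rightarrow> complex) \<Rightarrow> real^'n \<Rightarrow> complex" where
  "sph_grad_dot \<rho> Y x = (\<Sum>i\<in>UNIV. complex_of_real (sph_partial \<rho> i x) * sph_partial Y i x)"

definition pert_matrix :: "nat \<Rightarrow> (real^'n \<Rightarrow> real) \<Rightarrow> (nat \<Rightarrow> real^'n \<Rightarrow> complex) \<Rightarrow> nat \<Rightarrow> complex mat" where
  "pert_matrix k \<rho> Y N = mat N N (\<lambda>(m, n).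
     - sphere_int (\<lambda>x. of_nat k * complex_of_real (\<rho> x) * Y m x * cnj (Y n x))
     - sphere_int (\<lambda>x. sph_grad_dot \<rho> (Y m) x * cnj (Y n x)))"

definition sph_onb :: "nat \<Rightarrow> nat \<Rightarrow> (nat \<Rightarrow> real^'n \<Rightarrow> complex) \<Rightarrow> bool" where
  "sph_onb k N Y \<longleftrightarrow> (\<forall>m<N. sph_harm k (Y m)) \<and>
     (\<forall>m<N. \<forall>n<N. sphere_int (\<lambda>x. Y m x * cnj (Y n x)) = (if m = n then 1 else 0)) \<and>
     (\<forall>f::real^'n \<Rightarrow> complex. sph_harm k f \<longrightarrow>
        (\<exists>c. \<forall>x\<in>sphere 0 1. f x = (\<Sum>m<N. c m * Y m x)))"

end

theory Submission
  imports Defs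
begin

text \<open>The antipodal map \<open>x \<mapsto> - x\<close> preserves the surface measure, so integrals over \<open>S^d\<close> of
  odd functions vanish. A degree-\<open>k\<close> spherical harmonic has parity \<open>(-1)^k\<close>, and differentiating
  \<open>g (- z) = \<plusminus> g z\<close> shows that its spherical gradient has the opposite parity. Hence for odd \<open>p'\<close>
  every integrand defining \<open>M^{(d,k)}\<close> is odd and \<open>M^{(d,k)} = 0\<close>. For constant \<open>\<rho>\<close> the gradient
  term vanishes and orthonormality leaves the scalar matrix \<open>- k |S^d|^{-1/2} I\<close>.\<close>

lemma hom_poly_reflect:
  fixes P :: "real^'n \<Rightarrow> 'a::real_normed_field"
  assumes "hom_poly k P"
  shows "P (- x) = (-1) ^ k * P x"
proof -
  obtain A c where deg: "\<forall>\<alpha>\<in>A. (\<Sum>i\<in>UNIV. \<alpha> i) = k"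
    and P: "\<And>x. P x = (\<Sum>\<alpha>\<in>A. c \<alpha> * (\<Prod>i\<in>UNIV. of_real (x $ i) ^ \<alpha> i))"
    using assms unfolding hom_poly_def by blast
  have monomial: "(\<Prod>i\<in>UNIV. (of_real ((- x) $ i) :: 'a) ^ \<alpha> i)
      = (-1) ^ (\<Sum>i\<in>UNIV. \<alpha> i) * (\<Prod>i\<in>UNIV. of_real (x $ i) ^ \<alpha> i)" for \<alpha>
    by (simp add: power_minus[of "of_real _"] prod.distrib power_sum)
  have "P (- x) = (\<Sum>\<alpha>\<in>A. (-1) ^ k * (c \<alpha> * (\<Prod>i\<in>UNIV. of_real (x $ i) ^ \<alpha> i)))"
    unfolding P monomial using deg by (intro sum.cong refl) (simp add: mult.left_commute)
  then show ?thesis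
    by (simp add: P sum_distrib_left)
qed

lemma hom_poly_differentiable:
  fixes P :: "real^'n \<Rightarrow> 'a::real_normed_field"
  assumes "hom_poly k P"
  shows "P differentiable (at x)"
proof -
  obtain A c where "finite A" and P: "P = (\<lambda>x. \<Sum>\<alpha>\<in>A. c \<alpha> * (\<Prod>i\<in>UNIV. of_real (x $ i) ^ \<alpha> i))"
    using assms unfolding hom_poly_def by blast
  have coordinate: "((\<lambda>x::real^'n. (of_real (x $ i) :: 'a)) has_derivative (\<lambda>v. of_real (v $ i))) (at x)" for i
    by (intro bounded_linear_imp_has_derivative bounded_linear_compose[OF bounded_linear_of_real]
        bounded_linear_vec_nth)
  have "(\<lambda>x. \<Prod>i\<in>UNIV. (of_real (x $ i) :: 'a) ^ \<alpha> i) differentiable (at x)" for \<alpha>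
    using has_derivative_prod[of UNIV "\<lambda>i x. of_real (x $ i) ^ \<alpha> i", OF has_derivative_power[OF coordinate]]
    unfolding differentiable_def by blast
  with \<open>finite A\<close> show ?thesis
    unfolding P by (intro differentiable_sum differentiable_mult differentiable_const ballI)
qed

lemma sph_harm_reflect:
  fixes Y :: "real^'n \<Rightarrow> 'a::real_normed_field"
  assumes "sph_harm k Y" and "z \<in> sphere 0 1"
  shows "Y (- z) = (-1) ^ k * Y z"
proof -
  obtain P where "hom_poly k P" and "\<forall>x\<in>sphere 0 1. Y x = P x"
    using assms(1) unfolding sph_harm_def by blast
  with assms(2) show ?thesis
    using hom_poly_reflect[of k P z] by simp
qed

lemma sph_harm_sgn_differentiable:
  fixes Y :: "real^'n \<Rightarrow> 'a::real_normed_field"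
  assumes "sph_harm k Y" and "z \<noteq> 0"
  shows "(\<lambda>y. Y (sgn y)) differentiable (at z)"
proof -
  obtain P where P: "hom_poly k P" "\<forall>x\<in>sphere 0 1. Y x = P x"
    using assms(1) unfolding sph_harm_def by blast
  have "sgn differentiable (at z)"
    unfolding sgn_div_norm divide_inverse_commute[symmetric]
    using assms(2) by (intro differentiable_scaleR differentiable_inverse differentiable_norm_at
        differentiable_ident) simp_all
  from differentiable_chain_at[OF this hom_poly_differentiable[OF P(1)]]
  obtain D where "((P \<circ> sgn) has_derivative D) (at z)"
    unfolding differentiable_def by blast
  then have "((\<lambda>y. Y (sgn y)) has_derivative D) (at z)"
    by (rule has_derivative_transform_within_open[of _ _ _ _ "- {0}"])
       (use assms(2) P(2) in \<open>auto simp: norm_sgn\<close>)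
  then show ?thesis
    unfolding differentiable_def by blast
qed

lemma sph_partial_const:
  assumes "\<And>z. z \<in> sphere 0 1 \<Longrightarrow> g z = c" and "z \<noteq> 0"
  shows "sph_partial g i z = 0"
proof -
  have "((\<lambda>y. g (sgn y)) has_derivative (\<lambda>v. 0)) (at z)"
    by (rule has_derivative_transform_within_open[OF has_derivative_const[of c], of "- {0}"])
       (use assms in \<open>auto simp: norm_sgn\<close>)
  then show ?thesis
    unfolding sph_partial_def by (metis frechet_derivative_at)
qed

text \<open>The extension \<open>y \<mapsto> g (sgn y)\<close> satisfies \<open>G y = c *\<^sub>R G (- y)\<close> off the origin, and
  differentiating this identity at \<open>- z\<close> flips the sign of every directional derivative.\<close>
lemma sph_partial_reflect:
  fixes g :: "real^'n \<Rightarrow> 'a::real_normed_vector"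
  assumes reflect: "\<And>z. z \<in> sphere 0 1 \<Longrightarrow> g (- z) = c *\<^sub>R g z"
    and diff: "(\<lambda>y. g (sgn y)) differentiable (at z)" and "z \<noteq> 0"
  shows "sph_partial g i (- z) = - c *\<^sub>R sph_partial g i z"
proof -
  define G where "G = (\<lambda>y. g (sgn y))"
  define D where "D = frechet_derivative G (at z)"
  have GD: "(G has_derivative D) (at z)"
    using diff unfolding G_def D_def frechet_derivative_works .
  have "((\<lambda>y. - y) has_derivative (\<lambda>v. - v)) (at (- z))"
    by (rule has_derivative_minus[OF has_derivative_ident])
  from has_derivative_compose[OF this] GD
  have "((\<lambda>y. G (- y)) has_derivative (\<lambda>v. D (- v))) (at (- z))"
    by simp
  then have scaled: "((\<lambda>y. c *\<^sub>R G (- y)) has_derivative (\<lambda>v. c *\<^sub>R D (- v))) (at (- z))"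
    by (rule has_derivative_scaleR_right)
  have symmetric: "c *\<^sub>R G (- y) = G y" if "y \<noteq> 0" for y
  proof -
    have "sgn (- y) \<in> sphere 0 1"
      using that by (simp add: norm_sgn)
    from reflect[OF this] show ?thesis
      unfolding G_def sgn_minus minus_minus by (rule sym)
  qed
  have "(G has_derivative (\<lambda>v. c *\<^sub>R D (- v))) (at (- z))"
    by (rule has_derivative_transform_within_open[OF scaled, of "- {0}"])
       (use \<open>z \<noteq> 0\<close> symmetric in auto)
  then have "frechet_derivative G (at (- z)) = (\<lambda>v. c *\<^sub>R D (- v))"
    by (rule frechet_derivative_at[symmetric])
  then show ?thesis
    using linear_neg[OF has_derivative_linear[OF GD]]
    unfolding sph_partial_def G_def[symmetric] D_def[symmetric] by simp
qed

lemma sph_grad_dot_reflect: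
  fixes \<rho> :: "real^'n \<Rightarrow> real"
  assumes "sph_harm p \<rho>" and "sph_harm k Y" and "z \<noteq> 0"
  shows "sph_grad_dot \<rho> Y (- z) = (-1) ^ (p + k) * sph_grad_dot \<rho> Y z"
proof -
  have "sph_partial \<rho> i (- z) = - ((-1) ^ p * sph_partial \<rho> i z)" for i
    using sph_partial_reflect[of \<rho> "(-1) ^ p"] sph_harm_reflect[OF assms(1)]
      sph_harm_sgn_differentiable[OF assms(1,3)] assms(3) by simp
  moreover have "sph_partial Y i (- z) = - ((-1) ^ k * sph_partial Y i z)" for i
    using sph_partial_reflect[of Y "(-1) ^ k"] sph_harm_reflect[OF assms(2)]
      sph_harm_sgn_differentiable[OF assms(2,3)] assms(3) by (simp add: scaleR_conv_of_real)
  ultimately show ?thesis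
    unfolding sph_grad_dot_def sum_distrib_left by (simp add: power_add mult_ac)
qed

lemma sphere_int_cong:
  assumes "\<And>z. z \<in> sphere 0 1 \<Longrightarrow> f z = g z"
  shows "sphere_int f = sphere_int g"
proof -
  have "integral (ball 0 1) (\<lambda>x. f (sgn x)) = integral (ball 0 1) (\<lambda>x. g (sgn x))"
    by (rule integral_spike[of "{0}"]) (auto simp: assms norm_sgn)
  then show ?thesis
    unfolding sphere_int_def by simp
qed

lemma sphere_int_mult_left:
  fixes f :: "real^'n \<Rightarrow> 'a::{euclidean_space, real_normed_field}"
  shows "sphere_int (\<lambda>x. c * f x) = c * sphere_int f"
  unfolding sphere_int_def by (simp add: scaleR_conv_of_real mult.left_commute)

lemma integral_reflect_symmetric:
  fixes S :: "'n::euclidean_space set" and f :: "'n \<Rightarrow> 'a::banach"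
  assumes "bounded S" and symmetric: "\<And>x. - x \<in> S \<longleftrightarrow> x \<in> S"
  shows "integral S (\<lambda>x. f (- x)) = integral S f"
proof -
  obtain a where S: "S \<subseteq> cbox (- a) a"
    using bounded_subset_cbox_symmetric[OF assms(1)] by blast
  define h where "h = (\<lambda>x. if x \<in> S then f x else 0)"
  have restrict: "integral (cbox (- a) a) (\<lambda>x. if x \<in> S then g x else 0) = integral S g"
    for g :: "'n \<Rightarrow> 'a"
    using S by (simp add: integral_restrict_Int Int_absorb2)
  have "integral (cbox (- a) a) (\<lambda>x. if x \<in> S then f (- x) else 0) = integral (cbox (- a) a) (\<lambda>x. h (- x))"
    by (simp add: h_def symmetric)
  also have "\<dots> = integral (cbox (- a) a) h"
    using integral_reflect[of a "- a" h] by simp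
  finally show ?thesis
    unfolding h_def restrict .
qed

text \<open>In \<open>sphere_int\<close> the integrand is evaluated at \<open>sgn x\<close> for \<open>x\<close> in the unit ball, a set
  invariant under \<open>x \<mapsto> - x\<close>; the only exceptional point \<open>x = 0\<close> is negligible.\<close>
lemma sphere_int_odd:
  assumes "\<And>z. z \<in> sphere 0 1 \<Longrightarrow> f (- z) = - f z"
  shows "sphere_int f = 0"
proof -
  define I where "I = integral (ball 0 1) (\<lambda>x. f (sgn x))"
  have "I = integral (ball 0 1) (\<lambda>x. f (sgn (- x)))"
    unfolding I_def by (rule integral_reflect_symmetric[symmetric]) simp_all
  also have "\<dots> = integral (ball 0 1) (\<lambda>x. - f (sgn x))"
    by (rule integral_spike[of "{0}"]) (auto simp: assms norm_sgn sgn_minus)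
  also have "\<dots> = - I"
    unfolding I_def by simp
  finally have "I = 0"
    by (simp add: eq_neg_iff_add_eq_0 scaleR_2[symmetric])
  then show ?thesis
    unfolding sphere_int_def I_def by simp
qed

lemma eigenvalue_smult_one_mat:
  fixes a :: "'a::field"
  assumes "eigenvalue (a \<cdot>\<^sub>m 1\<^sub>m n) \<mu>"
  shows "\<mu> = a"
proof -
  obtain v where v: "v \<in> carrier_vec n" "v \<noteq> 0\<^sub>v n" "(a \<cdot>\<^sub>m 1\<^sub>m n) *\<^sub>v v = \<mu> \<cdot>\<^sub>v v"
    using assms unfolding eigenvalue_def eigenvector_def by auto
  then obtain i where i: "i < n" "v $ i \<noteq> 0"
    by (metis carrier_vecD eq_vecI index_zero_vec)
  have "((a \<cdot>\<^sub>m 1\<^sub>m n) *\<^sub>v v) $ i = a * v $ i"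
    using i v(1) by simp
  then have "a * v $ i = \<mu> * v $ i"
    using i v by (metis carrier_vecD index_smult_vec(1))
  then show ?thesis
    using i(2) by simp
qed

lemma pert_matrix_const:
  fixes \<rho> :: "real^'n \<Rightarrow> real"
  assumes const: "\<And>z. z \<in> sphere 0 1 \<Longrightarrow> \<rho> z = c"
    and orthonormal: "\<And>m n. m < N \<Longrightarrow> n < N \<Longrightarrow>
      sphere_int (\<lambda>x. Y m x * cnj (Y n x)) = (if m = n then 1 else 0)"
  shows "pert_matrix k \<rho> Y N = (- (of_nat k * of_real c)) \<cdot>\<^sub>m 1\<^sub>m N"
proof (rule eq_matI)
  fix m n assume "m < dim_row ((- (of_nat k * of_real c)) \<cdot>\<^sub>m 1\<^sub>m N)"
    and "n < dim_col ((- (of_nat k * of_real c)) \<cdot>\<^sub>m 1\<^sub>m N :: complex mat)"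
  then have mn: "m < N" "n < N"
    by simp_all
  have "sphere_int (\<lambda>x. of_nat k * complex_of_real (\<rho> x) * Y m x * cnj (Y n x))
      = sphere_int (\<lambda>x. (of_nat k * of_real c) * (Y m x * cnj (Y n x)))"
    by (rule sphere_int_cong) (simp add: const mult.assoc)
  also have "\<dots> = of_nat k * of_real c * (if m = n then 1 else 0)"
    by (simp only: sphere_int_mult_left orthonormal[OF mn])
  finally have "sphere_int (\<lambda>x. of_nat k * complex_of_real (\<rho> x) * Y m x * cnj (Y n x))
      = of_nat k * of_real c * (if m = n then 1 else 0)" .
  moreover have "sphere_int (\<lambda>x. sph_grad_dot \<rho> (Y m) x * cnj (Y n x)) = sphere_int (\<lambda>x::real^'n. 0)"
  proof (rule sphere_int_cong)
    fix z :: "real^'n" assume "z \<in> sphere 0 1"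
    then have "z \<noteq> 0"
      by auto
    then show "sph_grad_dot \<rho> (Y m) z * cnj (Y n z) = 0"
      using sph_partial_const[of \<rho> c, OF const] by (simp add: sph_grad_dot_def)
  qed
  ultimately show "pert_matrix k \<rho> Y N $$ (m, n) = ((- (of_nat k * of_real c)) \<cdot>\<^sub>m 1\<^sub>m N) $$ (m, n)"
    using mn by (simp add: pert_matrix_def sphere_int_def)
qed (simp_all add: pert_matrix_def)

text \<open>For odd \<open>p\<close> both integrands of every entry change sign under \<open>x \<mapsto> - x\<close>: the harmonics
  contribute \<open>(-1)^p (-1)^k (-1)^k\<close>, and so does the gradient term by \<open>sph_grad_dot_reflect\<close>.\<close>
lemma pert_matrix_odd:
  fixes \<rho> :: "real^'n \<Rightarrow> real"
  assumes "sph_harm p \<rho>" and "odd p" and harmonic: "\<And>m. m < N \<Longrightarrow> sph_harm k (Y m)"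
  shows "pert_matrix k \<rho> Y N = 0\<^sub>m N N"
proof (rule eq_matI)
  fix m n assume "m < dim_row (0\<^sub>m N N :: complex mat)" and "n < dim_col (0\<^sub>m N N :: complex mat)"
  then have mn: "m < N" "n < N"
    by simp_all
  have sign: "(-1) ^ p * (-1) ^ k * (-1) ^ k = (-1 :: complex)"
    using \<open>odd p\<close> by (simp flip: power_add add: mult_2[symmetric])
  have reflect: "\<rho> (- z) = (-1) ^ p * \<rho> z" "Y m (- z) = (-1) ^ k * Y m z"
    "cnj (Y n (- z)) = (-1) ^ k * cnj (Y n z)" if "z \<in> sphere 0 1" for z
    using sph_harm_reflect[OF assms(1) that] sph_harm_reflect[OF harmonic that] mn by simp_all
  have "sphere_int (\<lambda>x. of_nat k * complex_of_real (\<rho> x) * Y m x * cnj (Y n x)) = 0"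
  proof (rule sphere_int_odd)
    fix z :: "real^'n" assume "z \<in> sphere 0 1"
    with reflect sign show "of_nat k * complex_of_real (\<rho> (- z)) * Y m (- z) * cnj (Y n (- z))
        = - (of_nat k * complex_of_real (\<rho> z) * Y m z * cnj (Y n z))"
      by (simp add: mult_ac)
  qed
  moreover have "sphere_int (\<lambda>x. sph_grad_dot \<rho> (Y m) x * cnj (Y n x)) = 0"
  proof (rule sphere_int_odd)
    fix z :: "real^'n" assume z: "z \<in> sphere 0 1"
    then have "z \<noteq> 0"
      by auto
    have "sph_grad_dot \<rho> (Y m) (- z) * cnj (Y n (- z))
        = ((-1) ^ p * (-1) ^ k * (-1) ^ k) * (sph_grad_dot \<rho> (Y m) z * cnj (Y n z))"
      using sph_grad_dot_reflect[OF assms(1) harmonic[OF mn(1)] \<open>z \<noteq> 0\<close>] reflect(3)[OF z]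
      by (auto simp: power_add mult_ac)
    then show "sph_grad_dot \<rho> (Y m) (- z) * cnj (Y n (- z)) = - (sph_grad_dot \<rho> (Y m) z * cnj (Y n z))"
      unfolding sign by simp
  qed
  ultimately show "pert_matrix k \<rho> Y N $$ (m, n) = 0\<^sub>m N N $$ (m, n)"
    using mn by (simp add: pert_matrix_def)
qed (simp_all add: pert_matrix_def)

theorem theorem5p4:
  fixes \<rho> :: "real^'n \<Rightarrow> real" and p' :: nat
  assumes d3: "CARD('n) \<ge> 4"
    and rho_harm: "sph_harm p' \<rho>"
    and rho_norm: "sphere_int (\<lambda>x. \<rho> x ^ 2) = 1"
    and rho_const: "p' = 0 \<Longrightarrow> (\<forall>x\<in>sphere 0 1. \<rho> x = 1 / sqrt (sphere_area TYPE('n)))"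
  shows "\<forall>k::nat. \<forall>Y. \<forall>\<mu>. k \<ge> 1 \<longrightarrow> sph_onb k (Ndim (CARD('n) - 1) k) Y \<longrightarrow>
           eigenvalue (pert_matrix k \<rho> Y (Ndim (CARD('n) - 1) k)) \<mu> \<longrightarrow>
           (p' = 0 \<longrightarrow> \<mu> = - (of_nat k * complex_of_real (1 / sqrt (sphere_area TYPE('n))))) \<and>
           (odd p' \<longrightarrow> \<mu> = 0)"
proof (intro allI impI conjI)
  fix k :: nat and Y :: "nat \<Rightarrow> real^'n \<Rightarrow> complex" and \<mu> :: complex
  define N where "N = Ndim (CARD('n) - 1) k"
  assume "k \<ge> 1" and "sph_onb k (Ndim (CARD('n) - 1) k) Y"
    and "eigenvalue (pert_matrix k \<rho> Y (Ndim (CARD('n) - 1) k)) \<mu>"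
  then have onb: "sph_onb k N Y" and ev: "eigenvalue (pert_matrix k \<rho> Y N) \<mu>"
    unfolding N_def by simp_all
  show "\<mu> = - (of_nat k * complex_of_real (1 / sqrt (sphere_area TYPE('n))))" if "p' = 0"
  proof -
    have "pert_matrix k \<rho> Y N = (- (of_nat k * of_real (1 / sqrt (sphere_area TYPE('n))))) \<cdot>\<^sub>m 1\<^sub>m N"
      using onb unfolding sph_onb_def by (intro pert_matrix_const[OF rho_const[OF that, rule_format]]) auto
    with ev show ?thesis
      by (simp add: eigenvalue_smult_one_mat)
  qed
  show "\<mu> = 0" if "odd p'"
  proof -
    have "pert_matrix k \<rho> Y N = 0 \<cdot>\<^sub>m 1\<^sub>m N"
      using onb unfolding sph_onb_def by (subst pert_matrix_odd[OF rho_harm that]) auto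
    with ev show ?thesis
      by (simp add: eigenvalue_smult_one_mat)
  qed
qed

end
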